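(* Let $0<\alpha<\pi$, let $z\in\mathbb D$, and let $\Omega_j=\omega(z,I_j,\mathbb D)$, $j=1,2,3,4$, where $I_1=(0,\alpha)$, $I_2=(\alpha,\pi)$, $I_3=(\pi,\pi+\alpha)$, $I_4=(\pi+\alpha,2\pi)$ (arcs of the unit circle given by argument ranges). Then \[ \frac{\sin(\pi\Omega_1)\sin(\pi\Omega_3)}{\sin(\pi\Omega_2)\sin(\pi\Omega_4)}=\tan^2\frac{\alpha}{2}. \] Equivalently, with $U=\Omega_1+\Omega_3$, $V=\Omega_1-\Omega_3$, $T=\Omega_4-\Omega_2$, \[ \frac{\sin\frac\pi2(U+V)\,\sin\frac\pi2(U-V)}{\sin\frac\pi2(1-U-T)\,\sin\frac\pi2(1-U+T)}=\tan^2\frac\alpha2 . \]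
   Context: $\mathbb D$ is the open unit disk and $\omega(z,I,\mathbb D)$ denotes the harmonic measure at $z$ of the boundary arc $I\subset\partial\mathbb D$ with respect to $\mathbb D$ (the Poisson integral of the indicator function of $I$). *)

theory Defs
  imports "HOL-Analysis.Analysis"
begin

definition poisson_kernel :: "complex \<Rightarrow> real \<Rightarrow> real" where
  "poisson_kernel z t = (1 - (cmod z)^2) / (cmod (cis t - z))^2"

definition harmonic_measure_disk :: "complex \<Rightarrow> complex set \<Rightarrow> real" where
  "harmonic_measure_disk z I =
     (1 / (2 * pi)) * integral {0..2*pi} (\<lambda>t. poisson_kernel z t * indicator I (cis t))"

definition circle_arc :: "real \<Rightarrow> real \<Rightarrow> complex set" where
  "circle_arc a b = cis ` {a<..<b}"

end

theory Submission
  imports Defs "HOL-Complex_Analysis.Complex_Analysis"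
begin

text \<open>The Poisson kernel at e^(it) is 2 Im (i e^(it) / (e^(it) - z)) - 1, and i e^(it) / (e^(it) - z)
  is the logarithmic derivative of t \<mapsto> e^(it) - z. Hence \<pi> \<omega>(z, arc (a, b)) is the increase of
  arg (e^(it) - z) along the arc minus (b - a)/2, i.e. an argument of
  (e^(ib) - z) conj (e^(ia) - z) e^(-i(b - a)/2), and taking imaginary parts gives
  sin (\<pi> \<omega>) = sin ((b - a)/2) (1 - |z|^2) / (|e^(ia) - z| |e^(ib) - z|).
  In the cross ratio of four consecutive arcs the distances to z and the factor 1 - |z|^2 cancel,
  leaving sin^2 (\<alpha>/2) / cos^2 (\<alpha>/2). The second identity is the first one rewritten with
  \<Omega>1 + \<Omega>2 + \<Omega>3 + \<Omega>4 = 1.\<close>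

lemma poisson_kernel_eq_Im:
  assumes "cis t \<noteq> z"
  shows "poisson_kernel z t = 2 * Im (\<i> * cis t / (cis t - z)) - 1"
proof -
  obtain x y where z: "z = Complex x y" by (cases z)
  define d where "d = (cos t - x)^2 + (sin t - y)^2"
  define n where "n = cos t * (cos t - x) + sin t * (sin t - y)"
  have "d \<noteq> 0"
    using assms by (simp add: d_def z complex_eq_iff)
  have "poisson_kernel z t = (1 - x^2 - y^2) / d"
    unfolding poisson_kernel_def d_def by (simp add: z cmod_def cis.code)
  moreover have "Im (\<i> * cis t / (cis t - z)) = Re (cis t / (cis t - z))"
    by (metis Im_i_times times_divide_eq_right)
  moreover have "Re (cis t / (cis t - z)) = n / d"
    by (simp add: Re_divide z cis.code d_def n_def)
  moreover have "1 - x^2 - y^2 = 2 * n - d"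
    using sin_cos_squared_add[of t] by (simp add: d_def n_def power2_eq_square algebra_simps)
  ultimately show ?thesis
    using \<open>d \<noteq> 0\<close> by (simp add: diff_divide_distrib)
qed

lemma cis_eq_cis_imp_eq:
  assumes "0 \<le> t" "t \<le> 2 * pi" "0 < s" "s < 2 * pi" "cis t = cis s"
  shows "t = s"
proof -
  have "cis (t - s) = 1"
    using assms(5) by (simp add: cis_divide[symmetric])
  then have "exp (\<i> * complex_of_real (t - s)) = 1"
    by (simp add: cis_conv_exp)
  then obtain n :: int where n: "t - s = 2 * pi * n"
    unfolding exp_eq_1 by auto
  with assms(1-4) have "pi * -1 < pi * real_of_int n" "pi * real_of_int n < pi * 1"
    by linarith+
  then have "-1 < real_of_int n" "real_of_int n < 1"
    using mult_less_cancel_left_pos[OF pi_gt_zero] by blast+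
  then have "n = 0"
    by linarith
  then show ?thesis
    using n by simp
qed

lemma cis_mem_circle_arc_iff:
  assumes "0 \<le> a" "b \<le> 2 * pi" "t \<in> {0..2 * pi}"
  shows "cis t \<in> circle_arc a b \<longleftrightarrow> t \<in> {a<..<b}"
proof
  assume "cis t \<in> circle_arc a b"
  then obtain s where "s \<in> {a<..<b}" "cis t = cis s"
    unfolding circle_arc_def by auto
  with assms show "t \<in> {a<..<b}"
    using cis_eq_cis_imp_eq[of t s] by auto
qed (auto simp: circle_arc_def)

lemma harmonic_measure_disk_circle_arc:
  assumes "0 \<le> a" "b \<le> 2 * pi"
  shows "harmonic_measure_disk z (circle_arc a b) = integral {a..b} (poisson_kernel z) / (2 * pi)"
proof -
  have "integral {0..2 * pi} (\<lambda>t. poisson_kernel z t * indicator (circle_arc a b) (cis t))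
      = integral {0..2 * pi} (\<lambda>t. if t \<in> {a<..<b} then poisson_kernel z t else 0)"
    using cis_mem_circle_arc_iff[OF assms] by (intro integral_cong) (simp add: indicator_def)
  also have "\<dots> = integral ({a<..<b} \<inter> {0..2 * pi}) (poisson_kernel z)"
    by (rule integral_restrict_Int)
  also have "{a<..<b} \<inter> {0..2 * pi} = {a<..<b}"
    using assms by auto
  finally show ?thesis
    unfolding harmonic_measure_disk_def by (simp add: integral_open_interval_real)
qed

lemma has_integral_part_circlepath_inverse:
  assumes "cmod z \<noteq> 1" "a < b"
  shows "((\<lambda>t. \<i> * cis t / (cis t - z))
           has_integral contour_integral (part_circlepath 0 1 a b) (\<lambda>w. 1 / (w - z))) {a..b}"
proof -
  let ?g = "\<lambda>t. \<i> * cis t / (cis t - z)"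
  have "continuous_on {a..b} ?g"
    using assms(1) by (intro continuous_intros) auto
  then have "(?g has_integral integral {a..b} ?g) {a..b}"
    using integrable_continuous_interval by blast
  then have "((\<lambda>w. 1 / (w - z)) has_contour_integral integral {a..b} ?g) (part_circlepath 0 1 a b)"
    using has_contour_integral_part_circlepath_iff[OF assms(2), of "\<lambda>w. 1 / (w - z)" _ 0 1]
    by simp
  then show ?thesis
    using \<open>(?g has_integral integral {a..b} ?g) {a..b}\<close> contour_integral_unique by metis
qed

lemma exp_contour_integral_part_circlepath_inverse:
  assumes "cmod z \<noteq> 1"
  shows "exp (- contour_integral (part_circlepath 0 1 a b) (\<lambda>w. 1 / (w - z))) * (cis b - z)
           = cis a - z"
proof -
  let ?\<gamma> = "part_circlepath 0 1 a b"
  have "?\<gamma> piecewise_C1_differentiable_on {0..1}"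
    using valid_path_part_circlepath unfolding valid_path_def by blast
  moreover have "z \<notin> ?\<gamma> ` {0..1}"
    using assms by (auto simp: part_circlepath_def norm_exp_i_times)
  ultimately have "exp (- integral {0..1} (\<lambda>x. vector_derivative ?\<gamma> (at x) / (?\<gamma> x - z)))
                     * (?\<gamma> 1 - z) = ?\<gamma> 0 - z"
    by (intro winding_number_exp_integral(2)) auto
  then show ?thesis
    by (simp add: contour_integral_integral part_circlepath_def cis_conv_exp linepath_def)
qed

lemma cis_Im_eq_if_exp_mult:
  assumes "exp (- w) * v = u" "u \<noteq> 0"
  shows "cis (Im w) = v * cnj u / of_real (cmod u * cmod v)"
proof -
  have v: "v = exp w * u"
    using assms(1) by (metis exp_minus_inverse mult.assoc mult_1)
  have "exp w = of_real (exp (Re w)) * cis (Im w)"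
    by (rule exp_eq_polar)
  then have "cmod v = exp (Re w) * cmod u"
    by (simp add: v norm_mult)
  moreover have "u * cnj u = of_real ((cmod u)^2)"
    using complex_norm_square[of u] by simp
  ultimately show ?thesis
    using assms(2) \<open>exp w = _\<close>
    by (simp add: v field_simps power2_eq_square)
qed

lemma Im_chords_mult_cis:
  "Im ((cis b - z) * cnj (cis a - z) * cis (- ((b - a) / 2))) = sin ((b - a) / 2) * (1 - (cmod z)^2)"
proof -
  obtain x y where z: "z = Complex x y" by (cases z)
  define m where "m = (a + b) / 2"
  define h where "h = (b - a) / 2"
  have b: "b = m + h" and a: "a = m - h"
    unfolding m_def h_def by (simp_all add: field_simps)
  have "Im ((cis b - z) * cnj (cis a - z) * cis (- h))
     = ((sin b - y) * (cos a - x) - (cos b - x) * (sin a - y)) * cos h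
       - ((cos b - x) * (cos a - x) + (sin b - y) * (sin a - y)) * sin h"
    by (simp add: z cis.code algebra_simps)
  also have "\<dots> = sin h * (1 - (x^2 + y^2))"
    unfolding a b cos_add sin_add cos_diff sin_diff
    using sin_cos_squared_add[of m] sin_cos_squared_add[of h] by algebra
  finally show ?thesis
    by (simp add: h_def z cmod_power2)
qed

lemma has_integral_poisson_kernel:
  assumes "cmod z \<noteq> 1" "a < b"
  shows "(poisson_kernel z has_integral
           2 * Im (contour_integral (part_circlepath 0 1 a b) (\<lambda>w. 1 / (w - z))) - (b - a)) {a..b}"
proof -
  have "poisson_kernel z = (\<lambda>t. 2 * Im (\<i> * cis t / (cis t - z)) - 1)"
    using assms(1) by (intro ext poisson_kernel_eq_Im) auto
  moreover have "((\<lambda>_. 1) has_integral (b - a)) {a..b}"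
    using has_integral_const_real[of "1::real" a b] assms(2) by simp
  ultimately show ?thesis
    using has_integral_part_circlepath_inverse[of z a b] assms
    by (auto intro!: has_integral_diff has_integral_mult_right has_integral_Im)
qed

lemma integral_poisson_kernel_circle:
  assumes "cmod z < 1"
  shows "integral {0..2 * pi} (poisson_kernel z) = 2 * pi"
proof -
  have "((\<lambda>w. 1 / (w - z)) has_contour_integral 2 * pi * \<i> * 1) (circlepath 0 1)"
    using Cauchy_integral_circlepath_simple[of "\<lambda>_. 1"] assms by auto
  then have "contour_integral (part_circlepath 0 1 0 (2 * pi)) (\<lambda>w. 1 / (w - z)) = 2 * pi * \<i>"
    unfolding circlepath_def using contour_integral_unique by simp
  then show ?thesis
    using has_integral_poisson_kernel[of z 0 "2 * pi"] assms by (simp add: integral_unique)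
qed

lemma harmonic_measure_disk_arcs_sum:
  assumes "cmod z < 1" "0 < a" "a < b" "b < c" "c < 2 * pi"
  shows "harmonic_measure_disk z (circle_arc 0 a) + harmonic_measure_disk z (circle_arc a b)
       + harmonic_measure_disk z (circle_arc b c) + harmonic_measure_disk z (circle_arc c (2 * pi)) = 1"
proof -
  let ?P = "poisson_kernel z"
  have "?P integrable_on {0..2 * pi}"
    using has_integral_poisson_kernel[of z 0 "2 * pi"] assms(1) has_integral_integrable by force
  then have "?P integrable_on {a..2 * pi}" "?P integrable_on {b..2 * pi}"
    using assms by (auto intro: integrable_subinterval_real)
  have "integral {0..a} ?P + integral {a..2 * pi} ?P = integral {0..2 * pi} ?P"
       "integral {a..b} ?P + integral {b..2 * pi} ?P = integral {a..2 * pi} ?P"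
       "integral {b..c} ?P + integral {c..2 * pi} ?P = integral {b..2 * pi} ?P"
    using assms \<open>?P integrable_on {0..2 * pi}\<close> \<open>?P integrable_on {a..2 * pi}\<close>
      \<open>?P integrable_on {b..2 * pi}\<close> by (simp_all add: Henstock_Kurzweil_Integration.integral_combine)
  then have "integral {0..a} ?P + integral {a..b} ?P + integral {b..c} ?P + integral {c..2 * pi} ?P
               = integral {0..2 * pi} ?P"
    by linarith
  then show ?thesis
    using assms by (simp add: harmonic_measure_disk_circle_arc integral_poisson_kernel_circle
        add_divide_distrib[symmetric])
qed

lemma sin_pi_harmonic_measure_disk_arc:
  assumes "cmod z < 1" "0 \<le> a" "a < b" "b \<le> 2 * pi"
  shows "sin (pi * harmonic_measure_disk z (circle_arc a b))
           = sin ((b - a) / 2) * (1 - (cmod z)^2) / (cmod (cis a - z) * cmod (cis b - z))"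
proof -
  define I where "I = contour_integral (part_circlepath 0 1 a b) (\<lambda>w. 1 / (w - z))"
  have "integral {a..b} (poisson_kernel z) = 2 * Im I - (b - a)"
    using has_integral_poisson_kernel[of z a b] assms by (simp add: integral_unique I_def)
  then have "pi * harmonic_measure_disk z (circle_arc a b) = Im I - (b - a) / 2"
    using assms(2,4) by (simp add: harmonic_measure_disk_circle_arc field_simps)
  then have "sin (pi * harmonic_measure_disk z (circle_arc a b)) = Im (cis (Im I) * cis (- ((b - a) / 2)))"
    by (simp add: cis_mult)
  also have "cis (Im I) = (cis b - z) * cnj (cis a - z) / of_real (cmod (cis a - z) * cmod (cis b - z))"
    using assms(1) exp_contour_integral_part_circlepath_inverse[of z a b]
    by (intro cis_Im_eq_if_exp_mult) (auto simp: I_def)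
  finally show ?thesis
    by (simp only: times_divide_eq_left Im_divide_of_real Im_chords_mult_cis)
qed

lemma harmonic_measure_disk_arcs_cross_ratio:
  assumes "cmod z < 1" "0 < a" "a < b" "b < c" "c < 2 * pi"
  shows "sin (pi * harmonic_measure_disk z (circle_arc 0 a)) * sin (pi * harmonic_measure_disk z (circle_arc b c))
         / (sin (pi * harmonic_measure_disk z (circle_arc a b))
            * sin (pi * harmonic_measure_disk z (circle_arc c (2 * pi))))
       = sin (a / 2) * sin ((c - b) / 2) / (sin ((b - a) / 2) * sin ((2 * pi - c) / 2))"
proof -
  define k where "k = 1 - (cmod z)^2"
  define d where "d = (\<lambda>t. cmod (cis t - z))"
  have sin_arc: "sin (pi * harmonic_measure_disk z (circle_arc p q)) = sin ((q - p) / 2) * k / (d p * d q)"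
    if "0 \<le> p" "p < q" "q \<le> 2 * pi" for p q
    using sin_pi_harmonic_measure_disk_arc[OF assms(1) that] by (simp add: k_def d_def)
  have "k > 0"
    using assms(1) by (simp add: k_def abs_square_less_1)
  have d_pos: "d t > 0" for t
    using assms(1) by (auto simp: d_def)
  have sin_half_pos: "sin (x / 2) > 0" if "0 < x" "x < 2 * pi" for x
    using that by (intro sin_gt_zero) auto
  have "d (2 * pi) = d 0"
    by (simp add: d_def)
  then show ?thesis
    using assms \<open>k > 0\<close> d_pos[of 0] d_pos[of a] d_pos[of b] d_pos[of c]
      sin_half_pos[of a] sin_half_pos[of "b - a"] sin_half_pos[of "c - b"] sin_half_pos[of "2 * pi - c"]
    by (simp add: sin_arc field_simps)
qed

theorem lemma3p1:
  fixes \<alpha> :: real and z :: complex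
  assumes "0 < \<alpha>" and "\<alpha> < pi" and "cmod z < 1"
  defines "\<Omega>1 \<equiv> harmonic_measure_disk z (circle_arc 0 \<alpha>)"
      and "\<Omega>2 \<equiv> harmonic_measure_disk z (circle_arc \<alpha> pi)"
      and "\<Omega>3 \<equiv> harmonic_measure_disk z (circle_arc pi (pi + \<alpha>))"
      and "\<Omega>4 \<equiv> harmonic_measure_disk z (circle_arc (pi + \<alpha>) (2 * pi))"
  shows "(sin (pi * \<Omega>1) * sin (pi * \<Omega>3)) / (sin (pi * \<Omega>2) * sin (pi * \<Omega>4))
           = (tan (\<alpha> / 2))^2
         \<and> (let U = \<Omega>1 + \<Omega>3; V = \<Omega>1 - \<Omega>3; T = \<Omega>4 - \<Omega>2 in
           (sin (pi / 2 * (U + V)) * sin (pi / 2 * (U - V)))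
           / (sin (pi / 2 * (1 - U - T)) * sin (pi / 2 * (1 - U + T)))
           = (tan (\<alpha> / 2))^2)"
proof -
  have sum: "\<Omega>1 + \<Omega>2 + \<Omega>3 + \<Omega>4 = 1"
    unfolding \<Omega>1_def \<Omega>2_def \<Omega>3_def \<Omega>4_def
    using assms by (intro harmonic_measure_disk_arcs_sum) auto
  have "sin ((pi - \<alpha>) / 2) = cos (\<alpha> / 2)"
    by (simp add: diff_divide_distrib sin_diff)
  moreover have "(2 * pi - (pi + \<alpha>)) / 2 = (pi - \<alpha>) / 2"
    by simp
  ultimately have cross_ratio: "sin (pi * \<Omega>1) * sin (pi * \<Omega>3) / (sin (pi * \<Omega>2) * sin (pi * \<Omega>4))
                   = (tan (\<alpha> / 2))^2"
    unfolding \<Omega>1_def \<Omega>2_def \<Omega>3_def \<Omega>4_def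
    using harmonic_measure_disk_arcs_cross_ratio[of z \<alpha> pi "pi + \<alpha>"] assms
    by (simp add: tan_def power2_eq_square)
  have "1 - (\<Omega>1 + \<Omega>3) - (\<Omega>4 - \<Omega>2) = 2 * \<Omega>2" "1 - (\<Omega>1 + \<Omega>3) + (\<Omega>4 - \<Omega>2) = 2 * \<Omega>4"
    using sum by linarith+
  then have "pi / 2 * ((\<Omega>1 + \<Omega>3) + (\<Omega>1 - \<Omega>3)) = pi * \<Omega>1"
    "pi / 2 * ((\<Omega>1 + \<Omega>3) - (\<Omega>1 - \<Omega>3)) = pi * \<Omega>3"
    "pi / 2 * (1 - (\<Omega>1 + \<Omega>3) - (\<Omega>4 - \<Omega>2)) = pi * \<Omega>2"
    "pi / 2 * (1 - (\<Omega>1 + \<Omega>3) + (\<Omega>4 - \<Omega>2)) = pi * \<Omega>4"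
    by simp_all
  then show ?thesis
    using cross_ratio by (simp only: Let_def simp_thms)
qed

end
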